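(* Let $S,T\subseteq\mathbb{Z}_{>0}$ be finite and $x\in T\setminus(T\triangleleft S)$. Then $(T\setminus\{x\})\triangleleft S=T\triangleleft S$.
   Context: For finite $S,T\subseteq\mathbb{Z}_{>0}$, $T\triangleleft S$ is computed by going through the elements of $S$ from largest to smallest; each $s$ picks the largest element of $T$ that is less than $s$ and not yet picked (if one exists); $T\triangleleft S$ is the set of picked elements. *)

theory Defs
  imports Main
begin

text \<open>Process the elements of S (given as a list, largest first); the second argument is
the set of not-yet-picked elements of T.\<close>
fun pick_run :: "nat list \<Rightarrow> nat set \<Rightarrow> nat set" where
  "pick_run [] A = {}"
| "pick_run (s # ss) A =
     (if \<exists>t\<in>A. t < s
      then (let t = Max {t\<in>A. t < s} in insert t (pick_run ss (A - {t})))
      else pick_run ss A)"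

definition tri :: "nat set \<Rightarrow> nat set \<Rightarrow> nat set" (infixl "\<triangleleft>" 65) where
  "T \<triangleleft> S = pick_run (rev (sorted_list_of_set S)) T"

end

theory Submission
  imports Defs
begin

lemma Max_Diff_singleton:
  fixes A :: "'a::linorder set"
  assumes "finite A" and "A \<noteq> {}" and "x \<noteq> Max A"
  shows "Max (A - {x}) = Max A"
proof (rule antisym)
  have "Max A \<in> A - {x}"
    using assms by simp
  then show "Max A \<le> Max (A - {x})"
    using assms(1) by (simp add: Max_ge)
  show "Max (A - {x}) \<le> Max A"
    using assms(1) \<open>Max A \<in> A - {x}\<close> by (intro Max_mono) auto
qed

text \<open>An element that is never picked does not influence any of the picks: whenever it is
available, it is not the largest candidate below the current s.\<close>

lemma pick_run_Diff_unpicked: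
  assumes "finite A" and "x \<notin> pick_run ss A"
  shows "pick_run ss (A - {x}) = pick_run ss A"
  using assms
proof (induction ss arbitrary: A)
  case Nil
  then show ?case by simp
next
  case (Cons s ss)
  let ?C = "{t \<in> A. t < s}"
  show ?case
  proof (cases "\<exists>t\<in>A. t < s")
    case True
    define t where "t = Max ?C"
    have picked: "pick_run (s # ss) A = insert t (pick_run ss (A - {t}))"
      using True by (simp add: t_def Let_def)
    with Cons.prems have "x \<noteq> t" and x_unpicked: "x \<notin> pick_run ss (A - {t})"
      by auto
    have "t \<in> ?C"
      unfolding t_def using Cons.prems(1) True by (intro Max_in) auto
    with \<open>x \<noteq> t\<close> have "\<exists>u\<in>A - {x}. u < s"
      by auto
    moreover have "Max {u \<in> A - {x}. u < s} = t"
    proof -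
      have "{u \<in> A - {x}. u < s} = ?C - {x}"
        by auto
      then show ?thesis
        using Max_Diff_singleton[of ?C x] Cons.prems(1) True \<open>x \<noteq> t\<close> by (auto simp: t_def)
    qed
    moreover have "A - {x} - {t} = A - {t} - {x}"
      by auto
    ultimately show ?thesis
      using picked Cons.IH[of "A - {t}"] Cons.prems(1) x_unpicked by (simp add: Let_def)
  next
    case False
    then show ?thesis
      using Cons by simp
  qed
qed

theorem lemma4p3:
  fixes S T :: "nat set" and x :: nat
  assumes "finite S" and "finite T"
    and "\<forall>s\<in>S. 0 < s" and "\<forall>t\<in>T. 0 < t"
    and "x \<in> T - (T \<triangleleft> S)"
  shows "(T - {x}) \<triangleleft> S = T \<triangleleft> S"
  using pick_run_Diff_unpicked assms(2,5) unfolding tri_def by blast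

end
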